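(* Let $D$ be a finite set and $P:D^2\to\{0,1\}$ a binary predicate. Assume there exist two-element subsets $B,C\subseteq D$ such that $P|_{B\times C}$ is a singleton. Then for every positive integer $n$ there is an instance $I$ of $\mathrm{CSP}(P)$ with $2n$ variables and $n^2$ constraints such that for every $0<\varepsilon<1$, every $\varepsilon$-sparsifier of $I$ has $n^2$ constraints.
   Context: A binary CSP instance is $I=(V,D,\Pi,w)$ where $V$ is a finite set of variables, $D$ a finite domain, $\Pi$ a set of constraints, each a pair $\langle (u,v),P\rangle$ with $u,v\in V$ distinct and $P:D^2\to\{0,1\}$, and $w:\Pi\to\mathbb{R}_{>0}$ positive weights. $\mathrm{CSP}(P)$ is the class of instances in which every constraint uses the predicate $P$. For an assignment $A:V\to D$, $\mathrm{Val}_I(A)=\sum_{\pi=\langle(u,v),P\rangle\in\Pi} w(\pi)P(A(u),A(v))$. For $0<\varepsilon<1$, an $\varepsilon$-sparsifier of $I$ is an instance $I_\varepsilon=(V,D,\Pi_\varepsilon,w_\varepsilon)$ with $\Pi_\varepsilon\subseteq\Pi$ and $w_\varepsilon:\Pi_\varepsilon\to\mathbb{R}_{>0}$ such that for every $A:V\to D$, $(1-\varepsilon)\mathrm{Val}_I(A)\le \mathrm{Val}_{I_\varepsilon}(A)\le(1+\varepsilon)\mathrm{Val}_I(A)$; its number of constraints is $|\Pi_\varepsilon|$. A predicate is a singleton if exactly one tuple is mapped to $1$. $P|_{B\times C}$ denotes the restriction of $P$ to $B\times C$. *)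

theory Defs
  imports Complex_Main
begin

text \<open>An instance of CSP(P) with variable set V: since every constraint uses the same
predicate P, a constraint <(u,v),P> is identified with its scope (u,v).\<close>

definition csp_instance :: "'v set \<Rightarrow> ('v \<times> 'v) set \<Rightarrow> ('v \<times> 'v \<Rightarrow> real) \<Rightarrow> bool" where
  "csp_instance V Pi w \<longleftrightarrow> finite V \<and> Pi \<subseteq> {(u, v). u \<in> V \<and> v \<in> V \<and> u \<noteq> v}
     \<and> (\<forall>\<pi>\<in>Pi. w \<pi> > 0)"

definition Val :: "('d \<Rightarrow> 'd \<Rightarrow> bool) \<Rightarrow> ('v \<times> 'v) set \<Rightarrow> ('v \<times> 'v \<Rightarrow> real) \<Rightarrow> ('v \<Rightarrow> 'd) \<Rightarrow> real" where
  "Val P Pi w A = (\<Sum>\<pi>\<in>Pi. w \<pi> * (if P (A (fst \<pi>)) (A (snd \<pi>)) then 1 else 0))"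

definition is_sparsifier ::
  "'d set \<Rightarrow> ('d \<Rightarrow> 'd \<Rightarrow> bool) \<Rightarrow> 'v set \<Rightarrow> ('v \<times> 'v) set \<Rightarrow> ('v \<times> 'v \<Rightarrow> real) \<Rightarrow> real
    \<Rightarrow> ('v \<times> 'v) set \<Rightarrow> ('v \<times> 'v \<Rightarrow> real) \<Rightarrow> bool" where
  "is_sparsifier D P V Pi w eps Pe we \<longleftrightarrow>
     Pe \<subseteq> Pi \<and> (\<forall>\<pi>\<in>Pe. we \<pi> > 0) \<and>
     (\<forall>A. (\<forall>v\<in>V. A v \<in> D) \<longrightarrow>
        (1 - eps) * Val P Pi w A \<le> Val P Pe we A \<and> Val P Pe we A \<le> (1 + eps) * Val P Pi w A)"

end

theory Submission
  imports Defs
begin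

text \<open>Use the complete bipartite instance with unit weights whose constraints go from the
first \<open>n\<close> variables to the last \<open>n\<close>. Let \<open>B = {b, b'}\<close> and \<open>C = {c, c'}\<close>, where \<open>(b, c)\<close> is
the only pair of \<open>B \<times> C\<close> satisfying \<open>P\<close>. Sending \<open>i\<close> to \<open>b\<close>, \<open>j\<close> to \<open>c\<close>, the other left
variables to \<open>b'\<close> and the other right variables to \<open>c'\<close> satisfies exactly the constraint
\<open>(i, j)\<close>. A sparsifier omitting \<open>(i, j)\<close> would give this assignment value \<open>0 < (1 - \<epsilon>) \<cdot> 1\<close>,
so every \<open>\<epsilon>\<close>-sparsifier keeps all \<open>n\<^sup>2\<close> constraints.\<close>

lemma Val_unique_satisfied:
  assumes "finite S"
    and "\<And>\<pi>. \<pi> \<in> S \<Longrightarrow> P (A (fst \<pi>)) (A (snd \<pi>)) \<longleftrightarrow> \<pi> = \<pi>\<^sub>0"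
  shows "Val P S w A = (if \<pi>\<^sub>0 \<in> S then w \<pi>\<^sub>0 else 0)"
proof -
  have "Val P S w A = (\<Sum>\<pi>\<in>S. if \<pi> = \<pi>\<^sub>0 then w \<pi> else 0)"
    unfolding Val_def using assms(2) by (intro sum.cong) auto
  also have "\<dots> = (if \<pi>\<^sub>0 \<in> S then w \<pi>\<^sub>0 else 0)"
    using assms(1) by (simp add: sum.delta)
  finally show ?thesis .
qed

lemma sparsifier_contains_isolated_constraint:
  assumes sparsifier: "is_sparsifier D P V Pi w eps Pe we" and "eps < 1"
    and "finite Pi" and "\<pi>\<^sub>0 \<in> Pi" and "w \<pi>\<^sub>0 > 0"
    and A_D: "\<forall>v\<in>V. A v \<in> D"
    and isolates: "\<And>\<pi>. \<pi> \<in> Pi \<Longrightarrow> P (A (fst \<pi>)) (A (snd \<pi>)) \<longleftrightarrow> \<pi> = \<pi>\<^sub>0"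
  shows "\<pi>\<^sub>0 \<in> Pe"
proof (rule ccontr)
  assume "\<pi>\<^sub>0 \<notin> Pe"
  have "Pe \<subseteq> Pi"
    using sparsifier by (simp add: is_sparsifier_def)
  then have "Val P Pe we A = 0"
    using \<open>\<pi>\<^sub>0 \<notin> Pe\<close> \<open>finite Pi\<close> isolates by (subst Val_unique_satisfied) (auto dest: finite_subset)
  moreover have "Val P Pi w A = w \<pi>\<^sub>0"
    using \<open>finite Pi\<close> \<open>\<pi>\<^sub>0 \<in> Pi\<close> isolates by (simp add: Val_unique_satisfied)
  moreover have "(1 - eps) * Val P Pi w A \<le> Val P Pe we A"
    using sparsifier A_D by (simp add: is_sparsifier_def)
  ultimately have "(1 - eps) * w \<pi>\<^sub>0 \<le> 0"
    by simp
  moreover have "0 < (1 - eps) * w \<pi>\<^sub>0"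
    using \<open>eps < 1\<close> \<open>w \<pi>\<^sub>0 > 0\<close> by simp
  ultimately show False
    by linarith
qed

lemma sparsifier_eq_if_all_isolated:
  assumes "is_sparsifier D P V Pi w eps Pe we" and "eps < 1"
    and "finite Pi" and "\<forall>\<pi>\<in>Pi. w \<pi> > 0"
    and "\<And>\<pi>\<^sub>0. \<pi>\<^sub>0 \<in> Pi \<Longrightarrow> \<exists>A. (\<forall>v\<in>V. A v \<in> D) \<and>
           (\<forall>\<pi>\<in>Pi. P (A (fst \<pi>)) (A (snd \<pi>)) \<longleftrightarrow> \<pi> = \<pi>\<^sub>0)"
  shows "Pe = Pi"
proof
  show "Pe \<subseteq> Pi"
    using assms(1) by (simp add: is_sparsifier_def)
  show "Pi \<subseteq> Pe"
  proof
    fix \<pi>\<^sub>0 assume "\<pi>\<^sub>0 \<in> Pi"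
    with assms(5) obtain A where A_D: "\<forall>v\<in>V. A v \<in> D"
      and isolates: "\<forall>\<pi>\<in>Pi. P (A (fst \<pi>)) (A (snd \<pi>)) \<longleftrightarrow> \<pi> = \<pi>\<^sub>0"
      by blast
    from assms(4) \<open>\<pi>\<^sub>0 \<in> Pi\<close> have "w \<pi>\<^sub>0 > 0"
      by blast
    from sparsifier_contains_isolated_constraint[OF assms(1-3) \<open>\<pi>\<^sub>0 \<in> Pi\<close> this A_D] isolates
    show "\<pi>\<^sub>0 \<in> Pe"
      by blast
  qed
qed

lemma card_2_other_elementE:
  assumes "card S = 2" and "x \<in> S"
  obtains y where "S = {x, y}" and "x \<noteq> y"
proof -
  have "card (S - {x}) = 1"
    using assms by simp
  then obtain y where "S - {x} = {y}"
    by (auto simp: card_1_singleton_iff)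
  with \<open>x \<in> S\<close> have "S = {x, y}" and "x \<noteq> y"
    by blast+
  then show ?thesis
    using that by blast
qed

lemma singleton_restriction_2x2E:
  assumes "card B = 2" and "card C = 2"
    and "card {(b, c). b \<in> B \<and> c \<in> C \<and> P b c} = 1"
  obtains b b' c c' where "B = {b, b'}" and "C = {c, c'}" and "b \<noteq> b'" and "c \<noteq> c'"
    and "P b c" and "\<And>x y. x \<in> {b, b'} \<Longrightarrow> y \<in> {c, c'} \<Longrightarrow> P x y \<Longrightarrow> x = b \<and> y = c"
proof -
  obtain b c where bc: "{(x, y). x \<in> B \<and> y \<in> C \<and> P x y} = {(b, c)}"
    using assms(3) by (auto simp: card_1_singleton_iff)
  then have "b \<in> B" "c \<in> C" "P b c"
    by auto
  obtain b' where B: "B = {b, b'}" and "b \<noteq> b'"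
    using card_2_other_elementE[OF assms(1) \<open>b \<in> B\<close>] by blast
  obtain c' where C: "C = {c, c'}" and "c \<noteq> c'"
    using card_2_other_elementE[OF assms(2) \<open>c \<in> C\<close>] by blast
  have "\<And>x y. x \<in> {b, b'} \<Longrightarrow> y \<in> {c, c'} \<Longrightarrow> P x y \<Longrightarrow> x = b \<and> y = c"
    using bc unfolding B C by blast
  then show ?thesis
    by (rule that[OF B C \<open>b \<noteq> b'\<close> \<open>c \<noteq> c'\<close> \<open>P b c\<close>])
qed

lemma bipartite_constraint_isolated:
  assumes "L \<inter> R = {}" and "(i, j) \<in> L \<times> R"
    and "b \<noteq> b'" and "c \<noteq> c'" and "P b c"
    and unique: "\<And>x y. x \<in> {b, b'} \<Longrightarrow> y \<in> {c, c'} \<Longrightarrow> P x y \<Longrightarrow> x = b \<and> y = c"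
  obtains A where "\<forall>v. A v \<in> {b, b', c, c'}"
    and "\<forall>\<pi>\<in>L \<times> R. P (A (fst \<pi>)) (A (snd \<pi>)) \<longleftrightarrow> \<pi> = (i, j)"
proof
  define A where "A v = (if v = i then b else if v \<in> L then b' else if v = j then c else c')" for v
  show "\<forall>v. A v \<in> {b, b', c, c'}"
    by (simp add: A_def)
  have A_left: "A u = (if u = i then b else b')" if "u \<in> L" for u
    using that by (simp add: A_def)
  have A_right: "A v = (if v = j then c else c')" if "v \<in> R" for v
    using that assms(1,2) by (auto simp: A_def)
  show "\<forall>\<pi>\<in>L \<times> R. P (A (fst \<pi>)) (A (snd \<pi>)) \<longleftrightarrow> \<pi> = (i, j)"
  proof
    fix \<pi> assume "\<pi> \<in> L \<times> R"
    then obtain u v where "\<pi> = (u, v)" "u \<in> L" "v \<in> R"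
      by blast
    then have "A u \<in> {b, b'}" "A v \<in> {c, c'}"
      by (simp_all add: A_left A_right)
    show "P (A (fst \<pi>)) (A (snd \<pi>)) \<longleftrightarrow> \<pi> = (i, j)"
      unfolding \<open>\<pi> = (u, v)\<close> fst_conv snd_conv
    proof
      assume "P (A u) (A v)"
      then have "A u = b" "A v = c"
        using unique \<open>A u \<in> {b, b'}\<close> \<open>A v \<in> {c, c'}\<close> by blast+
      moreover note A_left[OF \<open>u \<in> L\<close>] A_right[OF \<open>v \<in> R\<close>]
      ultimately show "(u, v) = (i, j)"
        using \<open>b \<noteq> b'\<close> \<open>c \<noteq> c'\<close> by (metis prod.inject)
    next
      assume "(u, v) = (i, j)"
      then show "P (A u) (A v)"
        using \<open>u \<in> L\<close> \<open>v \<in> R\<close> \<open>P b c\<close> A_left A_right by simp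
    qed
  qed
qed

lemma bipartite_sparsifier_eq:
  assumes "is_sparsifier D P V (L \<times> R) w eps Pe we" and "eps < 1"
    and "L \<inter> R = {}" and "finite L" and "finite R" and "\<forall>\<pi>\<in>L \<times> R. w \<pi> > 0"
    and "{b, b', c, c'} \<subseteq> D" and "b \<noteq> b'" and "c \<noteq> c'" and "P b c"
    and "\<And>x y. x \<in> {b, b'} \<Longrightarrow> y \<in> {c, c'} \<Longrightarrow> P x y \<Longrightarrow> x = b \<and> y = c"
  shows "Pe = L \<times> R"
proof (rule sparsifier_eq_if_all_isolated[OF assms(1,2)])
  fix \<pi>\<^sub>0 assume "\<pi>\<^sub>0 \<in> L \<times> R"
  then obtain i j where "\<pi>\<^sub>0 = (i, j)" and ij: "(i, j) \<in> L \<times> R"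
    by blast
  obtain A where "\<forall>v. A v \<in> {b, b', c, c'}"
    and "\<forall>\<pi>\<in>L \<times> R. P (A (fst \<pi>)) (A (snd \<pi>)) \<longleftrightarrow> \<pi> = (i, j)"
    by (rule bipartite_constraint_isolated[where P = P, OF assms(3) ij assms(8-11)])
  with assms(7) show "\<exists>A. (\<forall>v\<in>V. A v \<in> D) \<and>
      (\<forall>\<pi>\<in>L \<times> R. P (A (fst \<pi>)) (A (snd \<pi>)) \<longleftrightarrow> \<pi> = \<pi>\<^sub>0)"
    unfolding \<open>\<pi>\<^sub>0 = (i, j)\<close> by (intro exI[of _ A]) blast
qed (use assms(4-6) in auto)

theorem theorem3:
  fixes D :: "'d set" and P :: "'d \<Rightarrow> 'd \<Rightarrow> bool" and B C :: "'d set"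
  assumes "finite D"
    and "B \<subseteq> D" and "C \<subseteq> D" and "card B = 2" and "card C = 2"
    and "card {(b, c). b \<in> B \<and> c \<in> C \<and> P b c} = 1"
    and "(n::nat) > 0"
  shows "\<exists>(V::nat set) Pi w. csp_instance V Pi w \<and> card V = 2 * n \<and> card Pi = n ^ 2 \<and>
           (\<forall>eps::real. 0 < eps \<and> eps < 1 \<longrightarrow>
              (\<forall>Pe we. is_sparsifier D P V Pi w eps Pe we \<longrightarrow> card Pe = n ^ 2))"
proof -
  obtain b b' c c' where "B = {b, b'}" "C = {c, c'}" and bc: "b \<noteq> b'" "c \<noteq> c'" "P b c"
    "\<And>x y. x \<in> {b, b'} \<Longrightarrow> y \<in> {c, c'} \<Longrightarrow> P x y \<Longrightarrow> x = b \<and> y = c"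
    using singleton_restriction_2x2E[OF assms(4-6)] by blast
  have "{b, b', c, c'} \<subseteq> D"
    using assms(2,3) \<open>B = {b, b'}\<close> \<open>C = {c, c'}\<close> by simp
  have "{0..<n} \<inter> {n..<2 * n} = {}"
    by auto
  have card_Pi: "card ({0..<n} \<times> {n..<2 * n}) = n ^ 2"
    by (simp add: power2_eq_square)
  have "card Pe = n ^ 2"
    if "is_sparsifier D P {0..<2 * n} ({0..<n} \<times> {n..<2 * n}) (\<lambda>_. 1) eps Pe we" "eps < 1"
    for eps Pe we
  proof -
    have "Pe = {0..<n} \<times> {n..<2 * n}"
      by (rule bipartite_sparsifier_eq[OF that \<open>{0..<n} \<inter> {n..<2 * n} = {}\<close> _ _ _
            \<open>{b, b', c, c'} \<subseteq> D\<close> bc]) simp_all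
    with card_Pi show ?thesis
      by simp
  qed
  moreover have "csp_instance {0..<2 * n} ({0..<n} \<times> {n..<2 * n}) (\<lambda>_. 1)"
    by (auto simp: csp_instance_def)
  ultimately show ?thesis
    using card_Pi
    by (intro exI[of _ "{0..<2 * n}"] exI[of _ "{0..<n} \<times> {n..<2 * n}"] exI[of _ "\<lambda>_. 1"]) simp
qed

end
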